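(* Let $M=(\mathbf{D},\mathbf{I},\Sigma,\sim)$ be a model, $\sigma_1\in\Sigma$, $\alpha\in\mathcal{L}_{\mathsf{B}}$ and $z\in\{x,y\}$. Then $$M,\sigma_1\models \bigwedge_{\mathcal{T}\subseteq Cons}\Big(Rz=\mathcal{T}\to \bigwedge_{c\in \mathcal{T}}\alpha[c/z]\Big)$$ iff for all $\sigma_2\in\mathsf{R}^z(\sigma_1)$, $M',\sigma_2\models\alpha$, where $M'=(\mathbf{D},\mathbf{I},\Sigma',\sim')$ is the update of $M$ associated to $\sigma_2$ induced by $[z]$.
   Context: Vocabulary: $Pred$ set of predicate symbols with arities containing a binary symbol $R$; $Cons$ nonempty finite set of constants; $Var=\{x,y\}$; terms are elements of $Cons\cup Var$. $\mathcal{L}_{\mathsf{B}}$: $\alpha::=P(t_1,\dots,t_m)\mid t_1\equiv t_2\mid\neg\alpha\mid(\alpha\land\alpha)$. $\alpha[c/z]$ is the result of replacing every occurrence of $z$ in $\alpha$ by $c$. For $\mathcal{T}\subseteq Cons$ and a term $u$, $Ru=\mathcal{T}:=\bigwedge_{t\in\mathcal{T}}Rut\land\bigwedge_{t\in Cons\setminus\mathcal{T}}\neg Rut$. A model is $M=(\mathbf{D},\mathbf{I},\Sigma,\sim)$: $\mathbf{D}$ nonempty finite; $\mathbf{I}(P)\subseteq\mathbf{D}^m$ for $m$-ary $P$, with $\mathbf{R}:=\mathbf{I}(R)$ serial; $\mathbf{I}(c)\in\mathbf{D}$ for $c\in Cons$, every element of $\mathbf{D}$ being some $\mathbf{I}(c)$;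 $\Sigma\subseteq\mathbf{D}^{Var}$ nonempty set of assignments (situations); $\sim_x,\sim_y$ equivalence relations on $\Sigma$. Semantics of $\mathcal{L}_{\mathsf{B}}$: with $t^{(\mathbf{I},\sigma)}=\mathbf{I}(t)$ for constants, $\sigma(t)$ for variables, $M,\sigma\models P(t_1,\dots,t_m)$ iff $(t_1^{(\mathbf{I},\sigma)},\dots,t_m^{(\mathbf{I},\sigma)})\in\mathbf{I}(P)$, $M,\sigma\models t_1\equiv t_2$ iff the values are equal, Boolean clauses standard. Fix a natural number $k$ (the sight). For $s\in\mathbf{D}$: $\mathbb{D}^0(s)=\{s\}$, $\mathbb{D}^{m+1}(s)=\mathbb{D}^m(s)\cup\{t:\exists u\in\mathbb{D}^m(s),(u,t)\in\mathbf{R}\text{ or }(t,u)\in\mathbf{R}\}$. For $\sigma,\sigma'\in\mathbf{D}^{Var}$, $\mathsf{R}^z\sigma\sigma'$ iff $(\sigma(z),\sigma'(z))\in\mathbf{R}$ and $\sigma(z')=\sigma'(z')$ for the other variable $z'$; $\mathsf{R}^z(\Gamma)=\{\sigma':\exists\sigma\in\Gamma,\mathsf{R}^z\sigma\sigma'\}$, $\mathsf{R}^z(\sigma)=\mathsf{R}^z(\{\sigma\})$; $\Sigma|\sigma=\{\sigma'\in\Sigma:\sigma\sim_w\sigma'\text{ for some }w\in Var\}$. For $\sigma_2\in\mathsf{R}^z(\sigma_1)$, the update of $M$ associated to $\sigma_2$ induced by $[z]$ is $(\mathbf{D},\mathbf{I},\Sigma',\sim')$ with $\Sigma'=\{\sigma_2\}$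 if $\sigma_2(x)\in\mathbb{D}^k(\sigma_2(y))$, and otherwise $\Sigma'=\{\sigma'\in\mathsf{R}^z(\Sigma|\sigma_1):\sigma'(x)\notin\mathbb{D}^k(\sigma'(y))\}$; and $\sigma'_1\sim'_w\sigma'_2$ iff $\sigma'_1(w)=\sigma'_2(w)$, for $w\in Var$. *)

theory Defs
  imports Main
begin

datatype var = X | Y

datatype 'c trm = Con 'c | Vr var

datatype ('p, 'c) fm =
    Atom 'p "'c trm list"
  | Eq "'c trm" "'c trm"
  | Neg "('p, 'c) fm"
  | Conj "('p, 'c) fm" "('p, 'c) fm"

type_synonym 'd asg = "var \<Rightarrow> 'd"

text \<open>Models.  The set Cons of constants is the (finite, nonempty) type 'c.\<close>
record ('p, 'c, 'd) model =
  Dom :: "'d set"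
  IP  :: "'p \<Rightarrow> 'd list set"
  IC  :: "'c \<Rightarrow> 'd"
  Sig :: "'d asg set"
  sim :: "var \<Rightarrow> ('d asg \<times> 'd asg) set"

definition Rrel :: "'p \<Rightarrow> ('p, 'c, 'd) model \<Rightarrow> ('d \<times> 'd) set" where
  "Rrel R M = {(a, b). [a, b] \<in> IP M R}"

definition is_model ::
  "('p \<Rightarrow> nat) \<Rightarrow> 'p \<Rightarrow> ('p, 'c::finite, 'd) model \<Rightarrow> bool" where
  "is_model ar R M \<longleftrightarrow>
     ar R = 2 \<and>
     finite (Dom M) \<and> Dom M \<noteq> {} \<and>
     (\<forall>P. \<forall>ds \<in> IP M P. length ds = ar P \<and> set ds \<subseteq> Dom M) \<and>
     (\<forall>a \<in> Dom M. \<exists>b. (a, b) \<in> Rrel R M) \<and>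
     (\<forall>c. IC M c \<in> Dom M) \<and>
     Dom M = range (IC M) \<and>
     Sig M \<noteq> {} \<and> (\<forall>\<sigma> \<in> Sig M. \<forall>v. \<sigma> v \<in> Dom M) \<and>
     (\<forall>w. equiv (Sig M) (sim M w))"

fun wf :: "('p \<Rightarrow> nat) \<Rightarrow> ('p, 'c) fm \<Rightarrow> bool" where
  "wf ar (Atom P ts) = (length ts = ar P)"
| "wf ar (Eq t u) = True"
| "wf ar (Neg a) = wf ar a"
| "wf ar (Conj a b) = (wf ar a \<and> wf ar b)"

fun evalt :: "('p, 'c, 'd) model \<Rightarrow> 'd asg \<Rightarrow> 'c trm \<Rightarrow> 'd" where
  "evalt M \<sigma> (Con c) = IC M c"
| "evalt M \<sigma> (Vr v) = \<sigma> v"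

fun sat :: "('p, 'c, 'd) model \<Rightarrow> 'd asg \<Rightarrow> ('p, 'c) fm \<Rightarrow> bool" where
  "sat M \<sigma> (Atom P ts) = (map (evalt M \<sigma>) ts \<in> IP M P)"
| "sat M \<sigma> (Eq t u) = (evalt M \<sigma> t = evalt M \<sigma> u)"
| "sat M \<sigma> (Neg a) = (\<not> sat M \<sigma> a)"
| "sat M \<sigma> (Conj a b) = (sat M \<sigma> a \<and> sat M \<sigma> b)"

definition Imp :: "('p, 'c) fm \<Rightarrow> ('p, 'c) fm \<Rightarrow> ('p, 'c) fm" where
  "Imp a b = Neg (Conj a (Neg b))"

definition Top :: "('p, 'c) fm" where
  "Top = Eq (Vr X) (Vr X)"

fun conjs :: "('p, 'c) fm list \<Rightarrow> ('p, 'c) fm" where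
  "conjs [] = Top"
| "conjs (a # as) = Conj a (conjs as)"

definition BigConj :: "('p, 'c) fm set \<Rightarrow> ('p, 'c) fm" where
  "BigConj S = conjs (SOME xs. set xs = S)"

fun substt :: "var \<Rightarrow> 'c \<Rightarrow> 'c trm \<Rightarrow> 'c trm" where
  "substt z c (Con d) = Con d"
| "substt z c (Vr v) = (if v = z then Con c else Vr v)"

fun subst :: "var \<Rightarrow> 'c \<Rightarrow> ('p, 'c) fm \<Rightarrow> ('p, 'c) fm" where
  "subst z c (Atom P ts) = Atom P (map (substt z c) ts)"
| "subst z c (Eq t u) = Eq (substt z c t) (substt z c u)"
| "subst z c (Neg a) = Neg (subst z c a)"
| "subst z c (Conj a b) = Conj (subst z c a) (subst z c b)"

definition Req :: "'p \<Rightarrow> 'c trm \<Rightarrow> 'c::finite set \<Rightarrow> ('p, 'c) fm" where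
  "Req R u T = Conj (BigConj {Atom R [u, Con t] | t. t \<in> T})
                    (BigConj {Neg (Atom R [u, Con t]) | t. t \<notin> T})"

fun Dk :: "'p \<Rightarrow> ('p, 'c, 'd) model \<Rightarrow> nat \<Rightarrow> 'd \<Rightarrow> 'd set" where
  "Dk R M 0 s = {s}"
| "Dk R M (Suc m) s = Dk R M m s \<union>
     {t. \<exists>u \<in> Dk R M m s. (u, t) \<in> Rrel R M \<or> (t, u) \<in> Rrel R M}"

definition other :: "var \<Rightarrow> var" where
  "other z = (if z = X then Y else X)"

definition Rz :: "'p \<Rightarrow> ('p, 'c, 'd) model \<Rightarrow> var \<Rightarrow> 'd asg set \<Rightarrow> 'd asg set" where
  "Rz R M z \<Gamma> = {\<sigma>'. \<exists>\<sigma> \<in> \<Gamma>. (\<sigma> z, \<sigma>' z) \<in> Rrel R M \<and> \<sigma> (other z) = \<sigma>' (other z)}"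

definition restr :: "('p, 'c, 'd) model \<Rightarrow> 'd asg \<Rightarrow> 'd asg set" where
  "restr M \<sigma> = {\<sigma>' \<in> Sig M. \<exists>w. (\<sigma>, \<sigma>') \<in> sim M w}"

definition upd :: "'p \<Rightarrow> nat \<Rightarrow> var \<Rightarrow> 'd asg \<Rightarrow> 'd asg \<Rightarrow>
                   ('p, 'c, 'd) model \<Rightarrow> ('p, 'c, 'd) model" where
  "upd R k z \<sigma>1 \<sigma>2 M =
     (let S' = (if \<sigma>2 X \<in> Dk R M k (\<sigma>2 Y) then {\<sigma>2}
                else {\<sigma>' \<in> Rz R M z (restr M \<sigma>1). \<sigma>' X \<notin> Dk R M k (\<sigma>' Y)})
      in M\<lparr>Sig := S', sim := (\<lambda>w. {(a, b). a \<in> S' \<and> b \<in> S' \<and> a w = b w})\<rparr>)"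

end

theory Submission
  imports Defs
begin

text \<open>An update changes only the situations and the indistinguishability relations, while the
  truth of an \<open>\<L>\<^sub>B\<close> formula at an assignment depends only on the interpretation. So the right-hand
  side just says that \<open>\<alpha>\<close> holds at every \<open>z\<close>-variant of \<open>\<sigma>\<^sub>1\<close> along \<open>R\<close>. On the left, exactly one
  conjunct has a true guard, namely the one for the set \<open>\<T>\<close> of constants naming \<open>R\<close>-successors
  of \<open>\<sigma>\<^sub>1 z\<close>; since every element is named by a constant, its conclusion says the same thing.\<close>

lemma sat_conjs: "sat M \<sigma> (conjs \<phi>s) \<longleftrightarrow> (\<forall>\<phi>\<in>set \<phi>s. sat M \<sigma> \<phi>)"
  by (induction \<phi>s) (auto simp: Top_def)

lemma sat_BigConj: "finite S \<Longrightarrow> sat M \<sigma> (BigConj S) \<longleftrightarrow> (\<forall>\<phi>\<in>S. sat M \<sigma> \<phi>)"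
  unfolding BigConj_def sat_conjs by (simp add: someI_ex[OF finite_list])

lemma sat_BigConj_setcompr:
  "sat M \<sigma> (BigConj {f x | x :: 'a::finite. P x}) \<longleftrightarrow> (\<forall>x. P x \<longrightarrow> sat M \<sigma> (f x))"
  by (subst sat_BigConj) (auto intro: finite_image_set)

lemma sat_Imp: "sat M \<sigma> (Imp \<phi> \<psi>) \<longleftrightarrow> (sat M \<sigma> \<phi> \<longrightarrow> sat M \<sigma> \<psi>)"
  by (simp add: Imp_def)

lemma evalt_substt: "evalt M \<sigma> (substt z c t) = evalt M (\<sigma>(z := IC M c)) t"
  by (cases t) auto

lemma sat_subst: "sat M \<sigma> (subst z c \<alpha>) \<longleftrightarrow> sat M (\<sigma>(z := IC M c)) \<alpha>"
  by (induction \<alpha>) (simp_all add: evalt_substt comp_def fun_upd_def)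

lemma sat_cong_interp:
  assumes "IP M' = IP M" and "IC M' = IC M"
  shows "sat M' \<sigma> \<alpha> \<longleftrightarrow> sat M \<sigma> \<alpha>"
proof -
  have "evalt M' \<sigma> = evalt M \<sigma>"
  proof
    show "evalt M' \<sigma> t = evalt M \<sigma> t" for t
      using assms(2) by (cases t) simp_all
  qed
  then show ?thesis
    by (induction \<alpha>) (simp_all add: assms(1))
qed

lemma sat_upd: "sat (upd R k z \<sigma>\<^sub>1 \<sigma>\<^sub>2 M) \<sigma> \<alpha> \<longleftrightarrow> sat M \<sigma> \<alpha>"
  by (rule sat_cong_interp) (simp_all add: upd_def Let_def)

lemma sat_Req:
  fixes T :: "'c::finite set"
  shows "sat M \<sigma> (Req R u T) \<longleftrightarrow> T = {t. (evalt M \<sigma> u, IC M t) \<in> Rrel R M}"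
  by (auto simp: Req_def sat_BigConj_setcompr Rrel_def)

lemma Rrel_successor_named:
  assumes "is_model ar R M" and "(a, b) \<in> Rrel R M"
  shows "b \<in> range (IC M)"
proof -
  from assms have "set [a, b] \<subseteq> Dom M" and "Dom M = range (IC M)"
    unfolding is_model_def Rrel_def by blast+
  then show ?thesis by simp
qed

lemma other_neq: "other z \<noteq> z"
  by (cases z) (simp_all add: other_def)

lemma eq_fun_upd_if_agree_other:
  assumes "\<sigma> (other z) = \<sigma>' (other z)"
  shows "\<sigma>' = \<sigma>(z := \<sigma>' z)"
proof
  fix v
  have "v = z \<or> v = other z"
    by (cases v; cases z) (simp_all add: other_def)
  then show "\<sigma>' v = (\<sigma>(z := \<sigma>' z)) v"
    using assms by auto
qed

lemma Rz_singleton: "Rz R M z {\<sigma>} = (\<lambda>b. \<sigma>(z := b)) ` {b. (\<sigma> z, b) \<in> Rrel R M}"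
proof (intro equalityI subsetI)
  fix \<sigma>' assume "\<sigma>' \<in> Rz R M z {\<sigma>}"
  then have "(\<sigma> z, \<sigma>' z) \<in> Rrel R M" and "\<sigma>' = \<sigma>(z := \<sigma>' z)"
    by (simp_all add: Rz_def eq_fun_upd_if_agree_other)
  then show "\<sigma>' \<in> (\<lambda>b. \<sigma>(z := b)) ` {b. (\<sigma> z, b) \<in> Rrel R M}"
    by blast
qed (auto simp: Rz_def other_neq)

theorem fact5:
  fixes M :: "('p, 'c::finite, 'd) model"
    and ar :: "'p \<Rightarrow> nat" and R :: 'p and k :: nat
    and \<sigma>1 :: "'d asg" and \<alpha> :: "('p, 'c) fm" and z :: var
  assumes "is_model ar R M"
    and "\<sigma>1 \<in> Sig M"
    and "wf ar \<alpha>"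
  shows "sat M \<sigma>1 (BigConj {Imp (Req R (Vr z) T) (BigConj {subst z c \<alpha> | c. c \<in> T}) | T. T \<subseteq> UNIV})
     \<longleftrightarrow> (\<forall>\<sigma>2 \<in> Rz R M z {\<sigma>1}. sat (upd R k z \<sigma>1 \<sigma>2 M) \<sigma>2 \<alpha>)"
proof -
  have "sat M \<sigma>1 (BigConj {Imp (Req R (Vr z) T) (BigConj {subst z c \<alpha> | c. c \<in> T}) | T. T \<subseteq> UNIV})
      \<longleftrightarrow> (\<forall>T. sat M \<sigma>1 (Req R (Vr z) T) \<longrightarrow> (\<forall>c\<in>T. sat M \<sigma>1 (subst z c \<alpha>)))"
    unfolding sat_BigConj_setcompr sat_Imp by blast
  also have "\<dots> \<longleftrightarrow> (\<forall>c. (\<sigma>1 z, IC M c) \<in> Rrel R M \<longrightarrow> sat M (\<sigma>1(z := IC M c)) \<alpha>)"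
    by (simp add: sat_Req sat_subst)
  also have "\<dots> \<longleftrightarrow> (\<forall>b. (\<sigma>1 z, b) \<in> Rrel R M \<longrightarrow> sat M (\<sigma>1(z := b)) \<alpha>)"
    using Rrel_successor_named[OF assms(1)] by blast
  also have "\<dots> \<longleftrightarrow> (\<forall>\<sigma>2 \<in> Rz R M z {\<sigma>1}. sat (upd R k z \<sigma>1 \<sigma>2 M) \<sigma>2 \<alpha>)"
    by (simp add: Rz_singleton sat_upd)
  finally show ?thesis .
qed

end
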